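(* In the setting described in the context: if $(\Gamma,u,y,z)$ satisfies (P1) $\alpha_{ij}\hat{x}_j+u_{ij}\ge0$ and $-\alpha_{ij}\hat{x}_j+u_{ij}\ge0$ for all $j\in J_i,i\in I$; (P2) $y_{ij}+z_i\ge u_{ij}$ for all $j\in J_i,i\in I$; (P3) $\sum_{j\in J}a_{ij}\hat{x}_j-\sum_{j\in J_i}y_{ij}-\Gamma_iz_i\ge b_i$ for all $i\in I$; (P4) $y_{ij}\ge0$, $z_i\ge0$ for all $j\in J_i,i\in I$; (P5) $0\le\Gamma_i\le|J_i|$ for all $i\in I$, then $\Gamma\in\Theta$. Conversely, if $\sum_{j\in J}a_{ij}\hat{x}_j\ge b_i$ for all $i\in I$ and $\Gamma\in\Theta$, then there exists $(u,y,z)$ such that $(\Gamma,u,y,z)$ satisfies (P1)–(P5).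
   Context: Let $I=\{1,\dots,m\}$, $J=\{1,\dots,n\}$. Given are $a_{ij}\in\mathbb{R}$ ($i\in I,j\in J$), $b\in\mathbb{R}^m$, index sets $J_i\subseteq J$, nonnegative numbers $\alpha_{ij}$ ($j\in J_i,i\in I$), and an observed point $\hat{x}\in\mathbb{R}^n$. For $i\in I$ and $x\in\mathbb{R}^n$ let $j^i_1(x),\dots,j^i_{|J_i|}(x)$ be an ordering of $J_i$ such that $\alpha_{ij^i_k(x)}|x_{j^i_k(x)}|$ is the $k$-th largest element of $\{\alpha_{ij}|x_j|\}_{j\in J_i}$. For $\Gamma_i\in[0,|J_i|]$ define the protection value \[ P_i(\Gamma_i,x)=\sum_{k=1}^{\lfloor\Gamma_i\rfloor}\alpha_{ij^i_k(x)}|x_{j^i_k(x)}|+(\Gamma_i-\lfloor\Gamma_i\rfloor)\alpha_{ij^i_{\lceil\Gamma_i\rceil}(x)}|x_{j^i_{\lceil\Gamma_i\rceil}(x)}| \] (the last term being $0$ when $\Gamma_i$ is an integer). Let $s_i=\sum_{j\in J}a_{ij}\hat{x}_j-b_i$ and $\hat{I}=\{i\in I:0\le s_i\le\sum_{j\in J_i}\alpha_{ij}|\hat{x}_j|\}$. For $i\in\hat{I}$ let $\underline{\Gamma}_i=\min\{\sum_{j\in J_i}w_j: \sum_{j\in J_i}\alpha_{ij}|\hat{x}_j|w_j=s_i,\ 0\le w_j\le1\}$; it satisfies $s_i=P_i(\underline{\Gamma}_i,\hat{x})$. Standing assumption: for each $i\in\hat{I}$, $\underline{\Gamma}_i$ is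 the unique $\Gamma_i\in[0,|J_i|]$ with $s_i=P_i(\Gamma_i,\hat{x})$. Define $\Theta=\{\Gamma\in\mathbb{R}^m:\Gamma_i\in[0,\underline{\Gamma}_i]\ \forall i\in\hat{I};\ \Gamma_i\in[0,|J_i|]\ \forall i\in I\setminus\hat{I}\}$. The variables $u_{ij},y_{ij}$ ($j\in J_i,i\in I$), $z_i$ ($i\in I$), $\Gamma\in\mathbb{R}^m$ are real. *)

theory Defs
  imports Complex_Main
begin

text \<open>Index sets: I = {1..m}, J = {1..n}. Data are functions on naturals,
  only their values on the relevant index sets matter.
  Jset i is J_i, al i j is alpha_ij.\<close>

text \<open>Values alpha_ij |x_j| (j in J_i) sorted in non-increasing order;
  the k-th largest (k = 1,2,...) is at list position k-1.\<close>
definition sorted_vals :: "(nat \<Rightarrow> nat set) \<Rightarrow> (nat \<Rightarrow> nat \<Rightarrow> real) \<Rightarrow> nat \<Rightarrow> (nat \<Rightarrow> real) \<Rightarrow> real list" where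
  "sorted_vals Jset al i x =
     rev (sort (map (\<lambda>j. al i j * \<bar>x j\<bar>) (sorted_list_of_set (Jset i))))"

text \<open>Protection value P_i(G, x).  The fractional term is multiplied by
  G - floor G, hence is 0 when G is an integer.\<close>
definition protection :: "(nat \<Rightarrow> nat set) \<Rightarrow> (nat \<Rightarrow> nat \<Rightarrow> real) \<Rightarrow> nat \<Rightarrow> real \<Rightarrow> (nat \<Rightarrow> real) \<Rightarrow> real" where
  "protection Jset al i G x =
     (let vs = sorted_vals Jset al i x in
       (\<Sum>k<nat \<lfloor>G\<rfloor>. vs ! k) + (G - of_int \<lfloor>G\<rfloor>) * vs ! (nat \<lceil>G\<rceil> - 1))"

definition slack :: "nat \<Rightarrow> (nat \<Rightarrow> nat \<Rightarrow> real) \<Rightarrow> (nat \<Rightarrow> real) \<Rightarrow> (nat \<Rightarrow> real) \<Rightarrow> nat \<Rightarrow> real" where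
  "slack n a b xh i = (\<Sum>j\<in>{1..n}. a i j * xh j) - b i"

definition Ihat :: "nat \<Rightarrow> nat \<Rightarrow> (nat \<Rightarrow> nat \<Rightarrow> real) \<Rightarrow> (nat \<Rightarrow> real) \<Rightarrow> (nat \<Rightarrow> nat set) \<Rightarrow> (nat \<Rightarrow> nat \<Rightarrow> real) \<Rightarrow> (nat \<Rightarrow> real) \<Rightarrow> nat set" where
  "Ihat m n a b Jset al xh =
     {i\<in>{1..m}. 0 \<le> slack n a b xh i \<and> slack n a b xh i \<le> (\<Sum>j\<in>Jset i. al i j * \<bar>xh j\<bar>)}"

text \<open>Gamma-underbar: the minimum of the LP (the feasible set is compact and,
  for i in Ihat, nonempty, so the infimum is attained).\<close>
definition Gamma_low :: "nat \<Rightarrow> (nat \<Rightarrow> nat \<Rightarrow> real) \<Rightarrow> (nat \<Rightarrow> real) \<Rightarrow> (nat \<Rightarrow> nat set) \<Rightarrow> (nat \<Rightarrow> nat \<Rightarrow> real) \<Rightarrow> (nat \<Rightarrow> real) \<Rightarrow> nat \<Rightarrow> real" where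
  "Gamma_low n a b Jset al xh i =
     Inf {(\<Sum>j\<in>Jset i. w j) | w :: nat \<Rightarrow> real.
            (\<Sum>j\<in>Jset i. al i j * \<bar>xh j\<bar> * w j) = slack n a b xh i \<and>
            (\<forall>j\<in>Jset i. 0 \<le> w j \<and> w j \<le> 1)}"

definition Theta :: "nat \<Rightarrow> nat \<Rightarrow> (nat \<Rightarrow> nat \<Rightarrow> real) \<Rightarrow> (nat \<Rightarrow> real) \<Rightarrow> (nat \<Rightarrow> nat set) \<Rightarrow> (nat \<Rightarrow> nat \<Rightarrow> real) \<Rightarrow> (nat \<Rightarrow> real) \<Rightarrow> (nat \<Rightarrow> real) set" where
  "Theta m n a b Jset al xh =
     {G. (\<forall>i\<in>Ihat m n a b Jset al xh. 0 \<le> G i \<and> G i \<le> Gamma_low n a b Jset al xh i) \<and>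
         (\<forall>i\<in>{1..m} - Ihat m n a b Jset al xh. 0 \<le> G i \<and> G i \<le> real (card (Jset i)))}"

definition feasible :: "nat \<Rightarrow> nat \<Rightarrow> (nat \<Rightarrow> nat \<Rightarrow> real) \<Rightarrow> (nat \<Rightarrow> real) \<Rightarrow> (nat \<Rightarrow> nat set) \<Rightarrow> (nat \<Rightarrow> nat \<Rightarrow> real) \<Rightarrow> (nat \<Rightarrow> real)
    \<Rightarrow> (nat \<Rightarrow> real) \<Rightarrow> (nat \<Rightarrow> nat \<Rightarrow> real) \<Rightarrow> (nat \<Rightarrow> nat \<Rightarrow> real) \<Rightarrow> (nat \<Rightarrow> real) \<Rightarrow> bool" where
  "feasible m n a b Jset al xh G u y z \<longleftrightarrow>
     (\<forall>i\<in>{1..m}. \<forall>j\<in>Jset i. al i j * xh j + u i j \<ge> 0 \<and> - al i j * xh j + u i j \<ge> 0) \<and>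
     (\<forall>i\<in>{1..m}. \<forall>j\<in>Jset i. y i j + z i \<ge> u i j) \<and>
     (\<forall>i\<in>{1..m}. (\<Sum>j\<in>{1..n}. a i j * xh j) - (\<Sum>j\<in>Jset i. y i j) - G i * z i \<ge> b i) \<and>
     (\<forall>i\<in>{1..m}. (\<forall>j\<in>Jset i. y i j \<ge> 0) \<and> z i \<ge> 0) \<and>
     (\<forall>i\<in>{1..m}. 0 \<le> G i \<and> G i \<le> real (card (Jset i)))"

end

theory Submission
  imports Defs "HOL-Analysis.Lipschitz"
begin

(* Fix a row i and write v_j = alpha_ij |x_j|.  The protection value P(Gamma) is the optimum
   of the LP  max { sum_j v_j w_j : sum_j w_j <= Gamma, 0 <= w_j <= 1 },  whose dual is
   min_{z >= 0} Gamma z + sum_j max 0 (v_j - z); the minimum is attained at the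
   (floor Gamma + 1)-th largest v_j (at z = 0 if Gamma = |J_i|).  Constraints (P1)-(P4) of row i say exactly that some
   dual point has value at most s_i, so they are solvable iff P(Gamma_i) <= s_i.
   The dual formula also shows that P is nondecreasing and Lipschitz, so for i in Ihat the
   equation P(Gamma) = s_i has a root by the intermediate value theorem; the uniqueness
   assumption identifies this root with Gamma_low,
   and monotonicity turns P(Gamma_i) <= s_i into Gamma_i <= Gamma_low.  For rows outside
   Ihat with s_i >= 0 we have s_i > P(|J_i|), so every Gamma_i in [0, |J_i|] is admissible. *)

definition protection_list :: "real list \<Rightarrow> real \<Rightarrow> real" where
  "protection_list L G =
     (\<Sum>k<nat \<lfloor>G\<rfloor>. L ! k) + (G - of_int \<lfloor>G\<rfloor>) * L ! (nat \<lceil>G\<rceil> - 1)"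

definition protection_dual :: "real list \<Rightarrow> real \<Rightarrow> real \<Rightarrow> real" where
  "protection_dual L G t = G * t + sum_list (map (\<lambda>v. max 0 (v - t)) L)"

lemma protection_list_0 [simp]: "protection_list L 0 = 0"
  unfolding protection_list_def by simp

lemma protection_list_length: "protection_list L (real (length L)) = sum_list L"
  unfolding protection_list_def by (simp add: sum_list_sum_nth atLeast0LessThan)

lemma protection_list_floor_less:
  assumes "0 \<le> G" "nat \<lfloor>G\<rfloor> < length L"
  shows "protection_list L G = (\<Sum>k<nat \<lfloor>G\<rfloor>. L ! k) + frac G * L ! nat \<lfloor>G\<rfloor>"
proof (cases "G \<in> \<int>")
  case True
  then show ?thesis unfolding protection_list_def frac_def by simp
next
  case False
  then have "\<lceil>G\<rceil> = \<lfloor>G\<rfloor> + 1"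
    by (metis Ints_of_int ceiling_altdef)
  then have "nat \<lceil>G\<rceil> - 1 = nat \<lfloor>G\<rfloor>"
    using assms(1) by simp
  then show ?thesis unfolding protection_list_def frac_def by simp
qed

lemma nat_floor_less_or_eq:
  assumes "0 \<le> G" "G \<le> real N"
  shows "nat \<lfloor>G\<rfloor> < N \<or> G = real N"
  using assms by linarith

lemma protection_dual_nth:
  "protection_dual L G t = G * t + (\<Sum>k<length L. max 0 (L ! k - t))"
  unfolding protection_dual_def by (simp add: sum_list_sum_nth atLeast0LessThan)

lemma protection_list_le_dual:
  assumes "0 \<le> G" "G \<le> real (length L)"
  shows "protection_list L G \<le> protection_dual L G t"
  using nat_floor_less_or_eq[OF assms]
proof
  assume "G = real (length L)"
  moreover have "sum_list L \<le> sum_list (map (\<lambda>v. t + max 0 (v - t)) L)"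
    by (induction L) auto
  ultimately show ?thesis
    by (simp add: protection_list_length protection_dual_def sum_list_addf sum_list_triv)
next
  define f where "f = nat \<lfloor>G\<rfloor>"
  assume f: "nat \<lfloor>G\<rfloor> < length L"
  have G: "G = real f + frac G" unfolding f_def frac_def using assms by simp
  have r: "0 \<le> frac G" "frac G \<le> 1" by (simp_all add: frac_lt_1 less_imp_le)
  let ?m = "\<lambda>k. max 0 (L ! k - t)"
  have "protection_list L G = (\<Sum>k<f. L ! k) + frac G * L ! f"
    unfolding f_def using protection_list_floor_less[OF assms(1) f] .
  also have "\<dots> \<le> (\<Sum>k<f. t + ?m k) + frac G * (t + ?m f)"
    by (intro add_mono sum_mono mult_left_mono r) auto
  also have "\<dots> = G * t + ((\<Sum>k<f. ?m k) + frac G * ?m f)"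
    by (subst G) (simp add: sum.distrib algebra_simps)
  also have "\<dots> \<le> G * t + (\<Sum>k<Suc f. ?m k)"
    using r by (simp add: mult_left_le_one_le)
  also have "\<dots> \<le> G * t + (\<Sum>k<length L. ?m k)"
    using f by (intro add_left_mono sum_mono2) (auto simp: f_def)
  finally show ?thesis by (simp add: protection_dual_nth)
qed

lemma protection_list_eq_dual:
  assumes srt: "sorted_wrt (\<ge>) L" and nn: "\<forall>v\<in>set L. 0 \<le> v"
    and G: "0 \<le> G" "G \<le> real (length L)"
  shows "\<exists>t. 0 \<le> t \<and> t \<le> sum_list L \<and> protection_list L G = protection_dual L G t"
  using nat_floor_less_or_eq[OF G]
proof
  assume "G = real (length L)"
  moreover have "max 0 v = v" if "v \<in> set L" for v
    using nn that by auto
  ultimately show ?thesis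
    using nn by (intro exI[of _ 0])
      (simp add: protection_list_length protection_dual_def sum_list_nonneg map_idI)
next
  define f where "f = nat \<lfloor>G\<rfloor>"
  define t where "t = L ! f"
  assume "nat \<lfloor>G\<rfloor> < length L"
  then have f: "f < length L" by (simp add: f_def)
  have t: "0 \<le> t" "t \<le> sum_list L"
    using f nn unfolding t_def by (auto intro: member_le_sum_list)
  have "(\<Sum>k<length L. max 0 (L ! k - t)) = (\<Sum>k<f. max 0 (L ! k - t))"
    using f sorted_wrt_nth_less[OF srt] unfolding t_def
    by (intro sum.mono_neutral_right) (auto simp: linorder_not_less le_less)
  also have "\<dots> = (\<Sum>k<f. L ! k) - real f * t"
    using f sorted_wrt_nth_less[OF srt] unfolding t_def by (simp add: sum_subtractf)
  finally have "protection_dual L G t = (\<Sum>k<f. L ! k) + frac G * t"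
    using G by (simp add: protection_dual_nth frac_def f_def algebra_simps)
  moreover have "protection_list L G = (\<Sum>k<f. L ! k) + frac G * t"
    unfolding f_def t_def using protection_list_floor_less G f f_def by simp
  ultimately show ?thesis using t by auto
qed

lemma protection_list_mono:
  assumes "sorted_wrt (\<ge>) L" "\<forall>v\<in>set L. 0 \<le> v"
    and "0 \<le> G1" "G1 \<le> G2" "G2 \<le> real (length L)"
  shows "protection_list L G1 \<le> protection_list L G2"
proof -
  obtain t where t: "0 \<le> t" "protection_list L G2 = protection_dual L G2 t"
    using protection_list_eq_dual[of L G2] assms by auto
  have "protection_list L G1 \<le> protection_dual L G1 t"
    using assms by (intro protection_list_le_dual) auto
  also have "\<dots> \<le> protection_dual L G2 t"
    unfolding protection_dual_def using t(1) assms(4) by (simp add: mult_right_mono)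
  finally show ?thesis using t by simp
qed

lemma protection_list_lipschitz:
  assumes "sorted_wrt (\<ge>) L" "\<forall>v\<in>set L. 0 \<le> v"
  shows "(sum_list L)-lipschitz_on {0..real (length L)} (protection_list L)"
proof (rule lipschitz_onI)
  show "0 \<le> sum_list L" using assms(2) by (simp add: sum_list_nonneg)
  have one_sided: "protection_list L G' - protection_list L G \<le> sum_list L * \<bar>G' - G\<bar>"
    if G: "G \<in> {0..real (length L)}" and G': "G' \<in> {0..real (length L)}" for G G'
  proof -
    obtain t where t: "0 \<le> t" "t \<le> sum_list L"
      "protection_list L G = protection_dual L G t"
      using protection_list_eq_dual[of L G] assms G by auto
    have "protection_list L G' \<le> protection_dual L G' t"
      using G' by (intro protection_list_le_dual) auto
    also have "\<dots> = protection_list L G + (G' - G) * t"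
      using t(3) unfolding protection_dual_def by (simp add: algebra_simps)
    also have "(G' - G) * t \<le> \<bar>G' - G\<bar> * sum_list L"
      using t by (metis abs_ge_self abs_ge_zero mult_mono)
    finally show ?thesis by (simp add: mult.commute)
  qed
  fix G G' assume "G \<in> {0..real (length L)}" "G' \<in> {0..real (length L)}"
  from one_sided[OF this] one_sided[OF this(2,1)]
  show "dist (protection_list L G) (protection_list L G') \<le> sum_list L * dist G G'"
    by (simp add: dist_real_def abs_minus_commute)
qed

lemma protection_list_attains:
  assumes "sorted_wrt (\<ge>) L" "\<forall>v\<in>set L. 0 \<le> v"
    and "0 \<le> s" "s \<le> sum_list L"
  shows "\<exists>G. 0 \<le> G \<and> G \<le> real (length L) \<and> protection_list L G = s"
  using IVT'[of "protection_list L" 0 s "real (length L)"]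
    lipschitz_on_continuous_on[OF protection_list_lipschitz[OF assms(1,2)]] assms(3,4)
  by (simp add: protection_list_length)

lemma protection_eq_protection_list:
  "protection Jset al i G x = protection_list (sorted_vals Jset al i x) G"
  unfolding protection_def protection_list_def Let_def ..

lemma length_sorted_vals: "length (sorted_vals Jset al i x) = card (Jset i)"
  unfolding sorted_vals_def by simp

lemma sorted_sorted_vals: "sorted_wrt (\<ge>) (sorted_vals Jset al i x)"
  unfolding sorted_vals_def by (simp add: sorted_wrt_rev)

lemma set_sorted_vals:
  "finite (Jset i) \<Longrightarrow> set (sorted_vals Jset al i x) = (\<lambda>j. al i j * \<bar>x j\<bar>) ` Jset i"
  unfolding sorted_vals_def by simp

lemma sum_list_map_sorted_vals:
  assumes "finite (Jset i)"
  shows "sum_list (map g (sorted_vals Jset al i x)) = (\<Sum>j\<in>Jset i. g (al i j * \<bar>x j\<bar>))"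
proof -
  define vs where "vs = map (\<lambda>j. al i j * \<bar>x j\<bar>) (sorted_list_of_set (Jset i))"
  have "mset (sorted_vals Jset al i x) = mset vs"
    unfolding sorted_vals_def vs_def by simp
  then have "sum_list (map g (sorted_vals Jset al i x)) = sum_list (map g vs)"
    by (metis mset_map sum_mset_sum_list)
  also have "\<dots> = (\<Sum>j\<in>Jset i. g (al i j * \<bar>x j\<bar>))"
    using assms unfolding vs_def by (simp add: sum_list_distinct_conv_sum_set)
  finally show ?thesis .
qed

lemma sorted_vals_nonneg:
  "finite (Jset i) \<Longrightarrow> \<forall>j\<in>Jset i. 0 \<le> al i j \<Longrightarrow>
    \<forall>v\<in>set (sorted_vals Jset al i x). 0 \<le> v"
  by (auto simp: set_sorted_vals)

lemma protection_le_dual_bound: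
  assumes "finite (Jset i)" "0 \<le> G" "G \<le> real (card (Jset i))"
    and "\<forall>j\<in>Jset i. 0 \<le> y j \<and> al i j * \<bar>x j\<bar> \<le> y j + z"
  shows "protection Jset al i G x \<le> G * z + (\<Sum>j\<in>Jset i. y j)"
proof -
  have "protection Jset al i G x \<le> protection_dual (sorted_vals Jset al i x) G z"
    unfolding protection_eq_protection_list
    using assms(2,3) by (intro protection_list_le_dual) (simp_all add: length_sorted_vals)
  also have "\<dots> = G * z + (\<Sum>j\<in>Jset i. max 0 (al i j * \<bar>x j\<bar> - z))"
    unfolding protection_dual_def using sum_list_map_sorted_vals[of Jset i, OF assms(1)] by simp
  also have "\<dots> \<le> G * z + (\<Sum>j\<in>Jset i. y j)"
    using assms(4) by (intro add_left_mono sum_mono) auto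
  finally show ?thesis .
qed

lemma protection_eq_dual_bound:
  assumes "finite (Jset i)" "\<forall>j\<in>Jset i. 0 \<le> al i j" "0 \<le> G" "G \<le> real (card (Jset i))"
  shows "\<exists>z\<ge>0. protection Jset al i G x = G * z + (\<Sum>j\<in>Jset i. max 0 (al i j * \<bar>x j\<bar> - z))"
proof -
  obtain z where "0 \<le> z" "protection Jset al i G x = protection_dual (sorted_vals Jset al i x) G z"
    using protection_list_eq_dual[OF sorted_sorted_vals sorted_vals_nonneg[of Jset i al, OF assms(1,2)]] assms(3,4)
    by (auto simp: protection_eq_protection_list length_sorted_vals)
  then show ?thesis
    unfolding protection_dual_def sum_list_map_sorted_vals[of Jset i, OF assms(1)] by auto
qed

lemma protection_mono:
  assumes "finite (Jset i)" "\<forall>j\<in>Jset i. 0 \<le> al i j"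
    and "0 \<le> G1" "G1 \<le> G2" "G2 \<le> real (card (Jset i))"
  shows "protection Jset al i G1 x \<le> protection Jset al i G2 x"
  using protection_list_mono[OF sorted_sorted_vals sorted_vals_nonneg[of Jset i al, OF assms(1,2)]] assms(3-5)
  by (simp add: protection_eq_protection_list length_sorted_vals)

lemma protection_card:
  assumes "finite (Jset i)"
  shows "protection Jset al i (real (card (Jset i))) x = (\<Sum>j\<in>Jset i. al i j * \<bar>x j\<bar>)"
  using protection_list_length[of "sorted_vals Jset al i x"] sum_list_map_sorted_vals[of Jset i id, OF assms]
  by (simp add: protection_eq_protection_list length_sorted_vals)

lemma protection_attains:
  assumes "finite (Jset i)" "\<forall>j\<in>Jset i. 0 \<le> al i j"
    and "0 \<le> s" "s \<le> (\<Sum>j\<in>Jset i. al i j * \<bar>x j\<bar>)"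
  shows "\<exists>G. 0 \<le> G \<and> G \<le> real (card (Jset i)) \<and> protection Jset al i G x = s"
  using protection_list_attains[OF sorted_sorted_vals sorted_vals_nonneg[of Jset i al, OF assms(1,2)], of s]
    sum_list_map_sorted_vals[of Jset i id, OF assms(1)] assms(3,4)
  by (simp add: protection_eq_protection_list length_sorted_vals)

lemma Gamma_low_root:
  assumes i: "i \<in> Ihat m n a b Jset al xh"
    and fin: "finite (Jset i)" and nn: "\<forall>j\<in>Jset i. 0 \<le> al i j"
    and unique: "\<forall>G. 0 \<le> G \<and> G \<le> real (card (Jset i)) \<and>
                   slack n a b xh i = protection Jset al i G xh \<longrightarrow> G = Gamma_low n a b Jset al xh i"
  shows "0 \<le> Gamma_low n a b Jset al xh i \<and> Gamma_low n a b Jset al xh i \<le> real (card (Jset i)) \<and>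
         protection Jset al i (Gamma_low n a b Jset al xh i) xh = slack n a b xh i"
proof -
  obtain G where "0 \<le> G" "G \<le> real (card (Jset i))" "protection Jset al i G xh = slack n a b xh i"
    using protection_attains[of Jset i al, OF fin nn] i unfolding Ihat_def by blast
  moreover from this have "G = Gamma_low n a b Jset al xh i"
    using unique by simp
  ultimately show ?thesis by simp
qed

lemma protection_le_slack_iff_le_Gamma_low:
  assumes i: "i \<in> Ihat m n a b Jset al xh"
    and fin: "finite (Jset i)" and nn: "\<forall>j\<in>Jset i. 0 \<le> al i j"
    and unique: "\<forall>G. 0 \<le> G \<and> G \<le> real (card (Jset i)) \<and>
                   slack n a b xh i = protection Jset al i G xh \<longrightarrow> G = Gamma_low n a b Jset al xh i"
    and G: "0 \<le> G" "G \<le> real (card (Jset i))"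
  shows "protection Jset al i G xh \<le> slack n a b xh i \<longleftrightarrow> G \<le> Gamma_low n a b Jset al xh i"
proof -
  let ?G0 = "Gamma_low n a b Jset al xh i"
  have G0: "0 \<le> ?G0" "?G0 \<le> real (card (Jset i))" "protection Jset al i ?G0 xh = slack n a b xh i"
    using Gamma_low_root[OF i fin nn unique] by auto
  show ?thesis
  proof
    assume le: "protection Jset al i G xh \<le> slack n a b xh i"
    show "G \<le> ?G0"
    proof (rule ccontr)
      assume "\<not> G \<le> ?G0"
      then have "protection Jset al i ?G0 xh \<le> protection Jset al i G xh"
        using G G0 by (intro protection_mono[of Jset i al, OF fin nn]) auto
      then have "G = ?G0" using le G0 G unique by simp
      with \<open>\<not> G \<le> ?G0\<close> show False by simp
    qed
  next
    assume "G \<le> ?G0"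
    then show "protection Jset al i G xh \<le> slack n a b xh i"
      using G G0 protection_mono[of Jset i al G ?G0 xh, OF fin nn] by simp
  qed
qed

lemma protection_le_slack_outside_Ihat:
  assumes "i \<in> {1..m} - Ihat m n a b Jset al xh" "0 \<le> slack n a b xh i"
    and fin: "finite (Jset i)" and nn: "\<forall>j\<in>Jset i. 0 \<le> al i j"
    and G: "0 \<le> G" "G \<le> real (card (Jset i))"
  shows "protection Jset al i G xh \<le> slack n a b xh i"
proof -
  have "protection Jset al i G xh \<le> protection Jset al i (real (card (Jset i))) xh"
    using G by (intro protection_mono[of Jset i al, OF fin nn]) auto
  also have "\<dots> = (\<Sum>j\<in>Jset i. al i j * \<bar>xh j\<bar>)"
    using protection_card[of Jset i, OF fin] .
  also have "\<dots> \<le> slack n a b xh i"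
    using assms(1,2) unfolding Ihat_def by auto
  finally show ?thesis .
qed

lemma protection_le_slack_if_feasible:
  assumes fin: "finite (Jset i)" and nn: "\<forall>j\<in>Jset i. 0 \<le> al i j"
    and F: "feasible m n a b Jset al xh G u y z" and i: "i \<in> {1..m}"
  shows "0 \<le> G i \<and> G i \<le> real (card (Jset i)) \<and> protection Jset al i (G i) xh \<le> slack n a b xh i"
proof -
  have G: "0 \<le> G i" "G i \<le> real (card (Jset i))"
    using F i unfolding feasible_def by auto
  have "\<forall>j\<in>Jset i. 0 \<le> y i j \<and> al i j * \<bar>xh j\<bar> \<le> y i j + z i"
  proof
    fix j assume j: "j \<in> Jset i"
    have P1: "al i j * xh j + u i j \<ge> 0" "- al i j * xh j + u i j \<ge> 0"
      using F i j unfolding feasible_def by auto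
    have "al i j * \<bar>xh j\<bar> = \<bar>al i j * xh j\<bar>"
      using nn j by (simp add: abs_mult)
    also have "\<dots> \<le> u i j"
      using P1 by (simp add: abs_le_iff)
    also have "\<dots> \<le> y i j + z i"
      using F i j unfolding feasible_def by simp
    finally show "0 \<le> y i j \<and> al i j * \<bar>xh j\<bar> \<le> y i j + z i"
      using F i j unfolding feasible_def by simp
  qed
  then have "protection Jset al i (G i) xh \<le> G i * z i + (\<Sum>j\<in>Jset i. y i j)"
    by (rule protection_le_dual_bound[of Jset i, OF fin G])
  also have "\<dots> \<le> slack n a b xh i"
  proof -
    have "(\<Sum>j\<in>{1..n}. a i j * xh j) - (\<Sum>j\<in>Jset i. y i j) - G i * z i \<ge> b i"
      using F i unfolding feasible_def by blast
    then show ?thesis unfolding slack_def by linarith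
  qed
  finally show ?thesis using G by simp
qed

lemma ex_feasible_if_protection_le_slack:
  assumes fin: "\<forall>i\<in>{1..m}. finite (Jset i)"
    and nn: "\<forall>i\<in>{1..m}. \<forall>j\<in>Jset i. 0 \<le> al i j"
    and G: "\<forall>i\<in>{1..m}. 0 \<le> G i \<and> G i \<le> real (card (Jset i)) \<and>
                     protection Jset al i (G i) xh \<le> slack n a b xh i"
  shows "\<exists>u y z. feasible m n a b Jset al xh G u y z"
proof -
  let ?v = "\<lambda>i j. al i j * \<bar>xh j\<bar>"
  have dual_attained: "\<forall>i\<in>{1..m}. \<exists>t\<ge>0.
      protection Jset al i (G i) xh = G i * t + (\<Sum>j\<in>Jset i. max 0 (?v i j - t))"
    using G by (auto intro: protection_eq_dual_bound[of Jset _ al, OF bspec[OF fin] bspec[OF nn]])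
  obtain z where z: "\<forall>i\<in>{1..m}. 0 \<le> z i \<and>
      protection Jset al i (G i) xh = G i * z i + (\<Sum>j\<in>Jset i. max 0 (?v i j - z i))"
    using bchoice[OF dual_attained] by blast
  define y where "y i j = max 0 (?v i j - z i)" for i j
  have "feasible m n a b Jset al xh G ?v y z"
    unfolding feasible_def
  proof (intro conjI ballI)
    fix i j assume i: "i \<in> {1..m}" and j: "j \<in> Jset i"
    have "\<bar>al i j * xh j\<bar> \<le> ?v i j"
      using nn i j by (simp add: abs_mult)
    then show "al i j * xh j + ?v i j \<ge> 0" "- al i j * xh j + ?v i j \<ge> 0"
      by (simp_all add: abs_le_iff)
    show "y i j + z i \<ge> ?v i j" "y i j \<ge> 0"
      unfolding y_def by simp_all
  next
    fix i assume i: "i \<in> {1..m}"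
    then show "0 \<le> z i" "0 \<le> G i" "G i \<le> real (card (Jset i))"
      using z G by simp_all
    have "(\<Sum>j\<in>Jset i. y i j) + G i * z i = protection Jset al i (G i) xh"
      using z i unfolding y_def by simp
    moreover have "protection Jset al i (G i) xh \<le> slack n a b xh i"
      using G i by blast
    ultimately show "(\<Sum>j\<in>{1..n}. a i j * xh j) - (\<Sum>j\<in>Jset i. y i j) - G i * z i \<ge> b i"
      unfolding slack_def by linarith
  qed
  then show ?thesis by blast
qed

lemma mem_ThetaI:
  assumes fin: "\<forall>i\<in>{1..m}. finite (Jset i)"
    and nn: "\<forall>i\<in>{1..m}. \<forall>j\<in>Jset i. 0 \<le> al i j"
    and unique: "\<forall>i\<in>Ihat m n a b Jset al xh. \<forall>G::real. 0 \<le> G \<and> G \<le> real (card (Jset i)) \<and>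
                   slack n a b xh i = protection Jset al i G xh \<longrightarrow> G = Gamma_low n a b Jset al xh i"
    and G: "\<forall>i\<in>{1..m}. 0 \<le> G i \<and> G i \<le> real (card (Jset i)) \<and>
                     protection Jset al i (G i) xh \<le> slack n a b xh i"
  shows "G \<in> Theta m n a b Jset al xh"
proof -
  have "G i \<le> Gamma_low n a b Jset al xh i" if i: "i \<in> Ihat m n a b Jset al xh" for i
  proof -
    have i': "i \<in> {1..m}" using i unfolding Ihat_def by simp
    with G have "0 \<le> G i" "G i \<le> real (card (Jset i))" "protection Jset al i (G i) xh \<le> slack n a b xh i"
      by auto
    then show ?thesis
      using protection_le_slack_iff_le_Gamma_low[OF i bspec[OF fin i'] bspec[OF nn i'] bspec[OF unique i]]
      by simp
  qed
  moreover have "Ihat m n a b Jset al xh \<subseteq> {1..m}" unfolding Ihat_def by auto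
  ultimately show ?thesis using G unfolding Theta_def by auto
qed

lemma mem_ThetaD:
  assumes fin: "\<forall>i\<in>{1..m}. finite (Jset i)"
    and nn: "\<forall>i\<in>{1..m}. \<forall>j\<in>Jset i. 0 \<le> al i j"
    and unique: "\<forall>i\<in>Ihat m n a b Jset al xh. \<forall>G::real. 0 \<le> G \<and> G \<le> real (card (Jset i)) \<and>
                   slack n a b xh i = protection Jset al i G xh \<longrightarrow> G = Gamma_low n a b Jset al xh i"
    and slack_nonneg: "\<forall>i\<in>{1..m}. 0 \<le> slack n a b xh i"
    and G: "G \<in> Theta m n a b Jset al xh"
  shows "\<forall>i\<in>{1..m}. 0 \<le> G i \<and> G i \<le> real (card (Jset i)) \<and>
                     protection Jset al i (G i) xh \<le> slack n a b xh i"
proof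
  fix i assume i: "i \<in> {1..m}"
  show "0 \<le> G i \<and> G i \<le> real (card (Jset i)) \<and> protection Jset al i (G i) xh \<le> slack n a b xh i"
  proof (cases "i \<in> Ihat m n a b Jset al xh")
    case True
    note row = True bspec[OF fin i] bspec[OF nn i] bspec[OF unique True]
    have "0 \<le> G i" "G i \<le> Gamma_low n a b Jset al xh i"
      using G True unfolding Theta_def by auto
    moreover have "Gamma_low n a b Jset al xh i \<le> real (card (Jset i))"
      using Gamma_low_root[OF row] by simp
    ultimately show ?thesis
      using protection_le_slack_iff_le_Gamma_low[OF row] by simp
  next
    case False
    then have "0 \<le> G i" "G i \<le> real (card (Jset i))"
      using G i unfolding Theta_def by auto
    then show ?thesis
      using protection_le_slack_outside_Ihat[of i m n a b Jset al xh, OF _ _ bspec[OF fin i] bspec[OF nn i]] False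
        slack_nonneg i by simp
  qed
qed

theorem lemma2:
  fixes m n :: nat and a :: "nat \<Rightarrow> nat \<Rightarrow> real" and b :: "nat \<Rightarrow> real"
    and Jset :: "nat \<Rightarrow> nat set" and al :: "nat \<Rightarrow> nat \<Rightarrow> real" and xh :: "nat \<Rightarrow> real"
  assumes J_sub: "\<forall>i\<in>{1..m}. Jset i \<subseteq> {1..n}"
    and al_nonneg: "\<forall>i\<in>{1..m}. \<forall>j\<in>Jset i. 0 \<le> al i j"
    and unique: "\<forall>i\<in>Ihat m n a b Jset al xh. \<forall>G::real. 0 \<le> G \<and> G \<le> real (card (Jset i)) \<and>
                   slack n a b xh i = protection Jset al i G xh \<longrightarrow> G = Gamma_low n a b Jset al xh i"
  shows "(\<forall>G u y z. feasible m n a b Jset al xh G u y z \<longrightarrow> G \<in> Theta m n a b Jset al xh) \<and>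
         ((\<forall>i\<in>{1..m}. (\<Sum>j\<in>{1..n}. a i j * xh j) \<ge> b i) \<longrightarrow>
          (\<forall>G\<in>Theta m n a b Jset al xh. \<exists>u y z. feasible m n a b Jset al xh G u y z))"
proof -
  have fin: "\<forall>i\<in>{1..m}. finite (Jset i)"
    using J_sub finite_subset by blast
  show ?thesis
  proof (intro conjI allI impI ballI)
    fix G u y z assume "feasible m n a b Jset al xh G u y z"
    then show "G \<in> Theta m n a b Jset al xh"
      using protection_le_slack_if_feasible[of Jset _ al, OF bspec[OF fin] bspec[OF al_nonneg]]
      by (intro mem_ThetaI[OF fin al_nonneg unique]) blast
  next
    fix G assume "\<forall>i\<in>{1..m}. (\<Sum>j\<in>{1..n}. a i j * xh j) \<ge> b i" "G \<in> Theta m n a b Jset al xh"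
    then show "\<exists>u y z. feasible m n a b Jset al xh G u y z"
      by (intro ex_feasible_if_protection_le_slack[OF fin al_nonneg]
          mem_ThetaD[OF fin al_nonneg unique]) (auto simp: slack_def)
  qed
qed

end
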